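(* If an atomic flow $A$ is normal for $\mathsf w$ and $A\to_{\mathsf c}^\star B$, then $B$ is normal for $\mathsf w$.
   Context: An atomic flow is a tuple $(V,E,\eta,up,lo)$: finite sets of vertices and edges, a labelling of vertices by interaction, cut, weakening, coweakening, contraction or cocontraction, and maps $up:E\to V\cup\{\top\}$, $lo:E\to V\cup\{\bot\}$. Upper edges of $\nu$: $lo(\epsilon)=\nu$; lower edges: $up(\epsilon)=\nu$. (Upper, lower) edge numbers: $(0,2)$ interaction, $(2,0)$ cut, $(0,1)$ weakening, $(1,0)$ coweakening, $(2,1)$ contraction, $(1,2)$ cocontraction; no directed cycles; there is $\pi:E\to\{+,-\}$ giving all edges of a (co)contraction the same sign and the two edges of an interaction/cut different signs. A flow is normal for $\mathsf w$ if none of the following patterns occurs in it: a weakening whose lower edge is an upper edge of a contraction, of a cut, or is the upper edge of a cocontraction or of a coweakening; a coweakening whose upper edge is a lower edge of a cocontraction, of an interaction, or is the lower edge of a contraction. $\to_{\mathsf c}^\star$ is the reflexive-transitive closure of $\to_{\mathsf c}$, where $A\to_{\mathsf c}B$ means $B$ results from $A$ by one of these subgraph replacements: (c1) a contraction with upper edges $\epsilon_1,\epsilon_2$ whose lower edge is an upper edge of a cut with other upper edge $\epsilon_3$: replace by a new cocontraction with upper edge $\epsilon_3$ and new lower edges $\delta_1,\delta_2$, and two new cuts with upper edges $\{\epsilon_1,\delta_1\}$ and $\{\epsilon_2,\delta_2\}$; (c2) an interaction with lower edges $\epsilon_3,\epsilon_4$ where $\epsilon_4$ is the upper edge of a cocontraction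 with lower edges $\epsilon_1,\epsilon_2$: replace by a new contraction with lower edge $\epsilon_3$ and new upper edges $\delta_1,\delta_2$, and two new interactions with lower edges $\{\epsilon_1,\delta_1\}$ and $\{\epsilon_2,\delta_2\}$; (c3) a contraction with upper edges $\epsilon_1,\epsilon_2$ whose lower edge is the upper edge of a cocontraction with lower edges $\epsilon_3,\epsilon_4$: replace by cocontractions $\kappa_1,\kappa_2$ with upper edges $\epsilon_1,\epsilon_2$, contractions $\gamma_3,\gamma_4$ with lower edges $\epsilon_3,\epsilon_4$, and four new edges, one from each $\kappa_i$ to each $\gamma_j$. *)

theory Defs
  imports Main
begin

datatype kind = Interaction | Cut | Weakening | Coweakening | Contraction | Cocontraction

datatype sign = Plus | Minus

datatype 'v endpt = Top | Bot | Node 'v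

text \<open>A flow (V, E, eta, up, lo). The functions are total; only their values on
  V resp. E are meaningful.\<close>
record ('v, 'e) flow =
  verts :: "'v set"
  edges :: "'e set"
  lab   :: "'v \<Rightarrow> kind"
  up    :: "'e \<Rightarrow> 'v endpt"
  lo    :: "'e \<Rightarrow> 'v endpt"

definition upper_edges :: "('v, 'e) flow \<Rightarrow> 'v \<Rightarrow> 'e set" where
  "upper_edges A v = {e \<in> edges A. lo A e = Node v}"

definition lower_edges :: "('v, 'e) flow \<Rightarrow> 'v \<Rightarrow> 'e set" where
  "lower_edges A v = {e \<in> edges A. up A e = Node v}"

fun n_upper :: "kind \<Rightarrow> nat" where
  "n_upper Interaction = 0" | "n_upper Cut = 2" | "n_upper Weakening = 0"
| "n_upper Coweakening = 1" | "n_upper Contraction = 2" | "n_upper Cocontraction = 1"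

fun n_lower :: "kind \<Rightarrow> nat" where
  "n_lower Interaction = 2" | "n_lower Cut = 0" | "n_lower Weakening = 1"
| "n_lower Coweakening = 0" | "n_lower Contraction = 1" | "n_lower Cocontraction = 2"

definition vrel :: "('v, 'e) flow \<Rightarrow> ('v \<times> 'v) set" where
  "vrel A = {(u, w). \<exists>e \<in> edges A. up A e = Node u \<and> lo A e = Node w}"

definition atomic_flow :: "('v, 'e) flow \<Rightarrow> bool" where
  "atomic_flow A \<longleftrightarrow>
     finite (verts A) \<and> finite (edges A) \<and>
     (\<forall>e \<in> edges A. up A e \<in> Node ` verts A \<union> {Top} \<and> lo A e \<in> Node ` verts A \<union> {Bot}) \<and>
     (\<forall>v \<in> verts A. card (upper_edges A v) = n_upper (lab A v)
                   \<and> card (lower_edges A v) = n_lower (lab A v)) \<and>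
     acyclic (vrel A) \<and>
     (\<exists>\<pi> :: 'e \<Rightarrow> sign.
        (\<forall>v \<in> verts A. lab A v \<in> {Contraction, Cocontraction} \<longrightarrow>
            (\<forall>e \<in> upper_edges A v \<union> lower_edges A v. \<forall>e' \<in> upper_edges A v \<union> lower_edges A v. \<pi> e = \<pi> e')) \<and>
        (\<forall>v \<in> verts A. lab A v = Interaction \<longrightarrow>
            (\<forall>e \<in> lower_edges A v. \<forall>e' \<in> lower_edges A v. e \<noteq> e' \<longrightarrow> \<pi> e \<noteq> \<pi> e')) \<and>
        (\<forall>v \<in> verts A. lab A v = Cut \<longrightarrow>
            (\<forall>e \<in> upper_edges A v. \<forall>e' \<in> upper_edges A v. e \<noteq> e' \<longrightarrow> \<pi> e \<noteq> \<pi> e')))"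

definition normal_w :: "('v, 'e) flow \<Rightarrow> bool" where
  "normal_w A \<longleftrightarrow>
     \<not> (\<exists>\<nu> \<in> verts A. \<exists>\<mu> \<in> verts A. \<exists>e \<in> edges A.
          lab A \<nu> = Weakening \<and> up A e = Node \<nu> \<and> lo A e = Node \<mu> \<and>
          lab A \<mu> \<in> {Contraction, Cut, Cocontraction, Coweakening}) \<and>
     \<not> (\<exists>\<nu> \<in> verts A. \<exists>\<mu> \<in> verts A. \<exists>e \<in> edges A.
          lab A \<nu> = Coweakening \<and> lo A e = Node \<nu> \<and> up A e = Node \<mu> \<and>
          lab A \<mu> \<in> {Cocontraction, Interaction, Contraction})"

definition c1_step :: "('v, 'e) flow \<Rightarrow> ('v, 'e) flow \<Rightarrow> bool" where
  "c1_step A B \<longleftrightarrow>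
   (\<exists>g k e e1 e2 e3 k' c1 c2 d1 d2.
      g \<in> verts A \<and> k \<in> verts A \<and> lab A g = Contraction \<and> lab A k = Cut \<and>
      e \<in> edges A \<and> e1 \<in> edges A \<and> e2 \<in> edges A \<and> e3 \<in> edges A \<and>
      e1 \<noteq> e2 \<and> lo A e1 = Node g \<and> lo A e2 = Node g \<and>
      up A e = Node g \<and> lo A e = Node k \<and> e3 \<noteq> e \<and> lo A e3 = Node k \<and>
      k' \<notin> verts A \<and> c1 \<notin> verts A \<and> c2 \<notin> verts A \<and> k' \<noteq> c1 \<and> k' \<noteq> c2 \<and> c1 \<noteq> c2 \<and>
      d1 \<notin> edges A \<and> d2 \<notin> edges A \<and> d1 \<noteq> d2 \<and>
      verts B = (verts A - {g, k}) \<union> {k', c1, c2} \<and>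
      edges B = (edges A - {e}) \<union> {d1, d2} \<and>
      (\<forall>v \<in> verts B. lab B v =
          (if v = k' then Cocontraction else if v = c1 \<or> v = c2 then Cut else lab A v)) \<and>
      (\<forall>x \<in> edges B. up B x = (if x = d1 \<or> x = d2 then Node k' else up A x)) \<and>
      (\<forall>x \<in> edges B. lo B x =
          (if x = d1 \<or> x = e1 then Node c1 else if x = d2 \<or> x = e2 then Node c2
           else if x = e3 then Node k' else lo A x)))"

definition c2_step :: "('v, 'e) flow \<Rightarrow> ('v, 'e) flow \<Rightarrow> bool" where
  "c2_step A B \<longleftrightarrow>
   (\<exists>i k e1 e2 e3 e4 g' i1 i2 d1 d2.
      i \<in> verts A \<and> k \<in> verts A \<and> lab A i = Interaction \<and> lab A k = Cocontraction \<and>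
      e1 \<in> edges A \<and> e2 \<in> edges A \<and> e3 \<in> edges A \<and> e4 \<in> edges A \<and>
      e3 \<noteq> e4 \<and> up A e3 = Node i \<and> up A e4 = Node i \<and> lo A e4 = Node k \<and>
      e1 \<noteq> e2 \<and> up A e1 = Node k \<and> up A e2 = Node k \<and>
      g' \<notin> verts A \<and> i1 \<notin> verts A \<and> i2 \<notin> verts A \<and> g' \<noteq> i1 \<and> g' \<noteq> i2 \<and> i1 \<noteq> i2 \<and>
      d1 \<notin> edges A \<and> d2 \<notin> edges A \<and> d1 \<noteq> d2 \<and>
      verts B = (verts A - {i, k}) \<union> {g', i1, i2} \<and>
      edges B = (edges A - {e4}) \<union> {d1, d2} \<and>
      (\<forall>v \<in> verts B. lab B v =
          (if v = g' then Contraction else if v = i1 \<or> v = i2 then Interaction else lab A v)) \<and>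
      (\<forall>x \<in> edges B. lo B x = (if x = d1 \<or> x = d2 then Node g' else lo A x)) \<and>
      (\<forall>x \<in> edges B. up B x =
          (if x = d1 \<or> x = e1 then Node i1 else if x = d2 \<or> x = e2 then Node i2
           else if x = e3 then Node g' else up A x)))"

definition c3_step :: "('v, 'e) flow \<Rightarrow> ('v, 'e) flow \<Rightarrow> bool" where
  "c3_step A B \<longleftrightarrow>
   (\<exists>g k e e1 e2 e3 e4 k1 k2 g3 g4 d13 d14 d23 d24.
      g \<in> verts A \<and> k \<in> verts A \<and> lab A g = Contraction \<and> lab A k = Cocontraction \<and>
      e \<in> edges A \<and> e1 \<in> edges A \<and> e2 \<in> edges A \<and> e3 \<in> edges A \<and> e4 \<in> edges A \<and>
      e1 \<noteq> e2 \<and> lo A e1 = Node g \<and> lo A e2 = Node g \<and>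
      up A e = Node g \<and> lo A e = Node k \<and>
      e3 \<noteq> e4 \<and> up A e3 = Node k \<and> up A e4 = Node k \<and>
      k1 \<notin> verts A \<and> k2 \<notin> verts A \<and> g3 \<notin> verts A \<and> g4 \<notin> verts A \<and>
      distinct [k1, k2, g3, g4] \<and>
      d13 \<notin> edges A \<and> d14 \<notin> edges A \<and> d23 \<notin> edges A \<and> d24 \<notin> edges A \<and>
      distinct [d13, d14, d23, d24] \<and>
      verts B = (verts A - {g, k}) \<union> {k1, k2, g3, g4} \<and>
      edges B = (edges A - {e}) \<union> {d13, d14, d23, d24} \<and>
      (\<forall>v \<in> verts B. lab B v =
          (if v = k1 \<or> v = k2 then Cocontraction
           else if v = g3 \<or> v = g4 then Contraction else lab A v)) \<and>
      (\<forall>x \<in> edges B. up B x =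
          (if x = d13 \<or> x = d14 then Node k1 else if x = d23 \<or> x = d24 then Node k2
           else if x = e3 then Node g3 else if x = e4 then Node g4 else up A x)) \<and>
      (\<forall>x \<in> edges B. lo B x =
          (if x = d13 \<or> x = d23 then Node g3 else if x = d14 \<or> x = d24 then Node g4
           else if x = e1 then Node k1 else if x = e2 then Node k2 else lo A x)))"

definition c_step :: "('v, 'e) flow \<Rightarrow> ('v, 'e) flow \<Rightarrow> bool" where
  "c_step A B \<longleftrightarrow> atomic_flow A \<and> atomic_flow B \<and> (c1_step A B \<or> c2_step A B \<or> c3_step A B)"

end

(* A c-step removes two vertices, neither a weakening nor a coweakening, adds fresh vertices
   that are none of these either, and reattaches edges only at fresh vertices. So in a
   forbidden pattern of the result the (co)weakening and its edge are old, and the far end of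
   the edge was in the original flow either the same vertex with the same label, or one of the
   removed vertices, i.e. a contraction, cocontraction, cut or interaction in the position that
   is forbidden there as well. Thus every forbidden pattern is reflected back along c-steps. *)

theory Submission
  imports Defs
begin

definition weakening_redex :: "('v, 'e) flow \<Rightarrow> 'e \<Rightarrow> bool" where
  "weakening_redex A x \<longleftrightarrow> x \<in> edges A \<and>
     (\<exists>\<nu> \<in> verts A. \<exists>\<mu> \<in> verts A. up A x = Node \<nu> \<and> lo A x = Node \<mu> \<and>
        lab A \<nu> = Weakening \<and> lab A \<mu> \<in> {Contraction, Cut, Cocontraction, Coweakening})"

definition coweakening_redex :: "('v, 'e) flow \<Rightarrow> 'e \<Rightarrow> bool" where
  "coweakening_redex A x \<longleftrightarrow> x \<in> edges A \<and>
     (\<exists>\<nu> \<in> verts A. \<exists>\<mu> \<in> verts A. lo A x = Node \<nu> \<and> up A x = Node \<mu> \<and>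
        lab A \<nu> = Coweakening \<and> lab A \<mu> \<in> {Cocontraction, Interaction, Contraction})"

lemma normal_w_iff_no_redex:
  "normal_w A \<longleftrightarrow> (\<forall>x. \<not> weakening_redex A x \<and> \<not> coweakening_redex A x)"
  unfolding normal_w_def weakening_redex_def coweakening_redex_def by blast

lemma atomic_flow_endpoints:
  assumes "atomic_flow A" "x \<in> edges A"
  shows "up A x = Node v \<Longrightarrow> v \<in> verts A" and "lo A x = Node v \<Longrightarrow> v \<in> verts A"
  using assms unfolding atomic_flow_def by fastforce+

text \<open>The two label sets are exactly the kinds that a normal flow forbids at the far end of
  a coweakening resp. weakening edge.\<close>
definition replaces_without_weakenings :: "('v, 'e) flow \<Rightarrow> ('v, 'e) flow \<Rightarrow> bool" where
  "replaces_without_weakenings A B \<longleftrightarrow>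
     (\<forall>v \<in> verts A \<inter> verts B. lab B v = lab A v) \<and>
     (\<forall>v \<in> verts B - verts A. lab B v \<notin> {Weakening, Coweakening}) \<and>
     (\<forall>x \<in> edges B. (x \<in> edges A \<and> up B x = up A x) \<or>
        (up B x \<in> Node ` (verts B - verts A) \<and>
         (x \<in> edges A \<longrightarrow>
            up A x \<in> Node ` {v. lab A v \<in> {Interaction, Contraction, Cocontraction}}))) \<and>
     (\<forall>x \<in> edges B. (x \<in> edges A \<and> lo B x = lo A x) \<or>
        (lo B x \<in> Node ` (verts B - verts A) \<and>
         (x \<in> edges A \<longrightarrow>
            lo A x \<in> Node ` {v. lab A v \<in> {Contraction, Cut, Cocontraction}})))"

lemma weakening_redex_reflect:
  assumes A: "atomic_flow A" and R: "replaces_without_weakenings A B"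
    and "weakening_redex B x"
  shows "weakening_redex A x"
proof -
  obtain \<nu> \<mu> where x: "x \<in> edges B"
    and \<nu>: "\<nu> \<in> verts B" "up B x = Node \<nu>" "lab B \<nu> = Weakening"
    and \<mu>: "\<mu> \<in> verts B" "lo B x = Node \<mu>" "lab B \<mu> \<in> {Contraction, Cut, Cocontraction, Coweakening}"
    using \<open>weakening_redex B x\<close> unfolding weakening_redex_def by blast
  have \<nu>_old: "\<nu> \<in> verts A" "lab A \<nu> = Weakening"
    using R \<nu> unfolding replaces_without_weakenings_def by auto
  then have x_old: "x \<in> edges A" "up A x = Node \<nu>"
    using R x \<nu>(2) unfolding replaces_without_weakenings_def by auto
  show ?thesis
  proof (cases "lo B x = lo A x")
    case True
    then have "\<mu> \<in> verts A" "lab A \<mu> = lab B \<mu>"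
      using atomic_flow_endpoints(2)[OF A x_old(1)] R \<mu> unfolding replaces_without_weakenings_def
      by auto
    then show ?thesis
      using x_old \<nu>_old \<mu> True unfolding weakening_redex_def by auto
  next
    case False
    then obtain w where "lo A x = Node w" "lab A w \<in> {Contraction, Cut, Cocontraction}"
      using R x x_old(1) unfolding replaces_without_weakenings_def by blast
    then show ?thesis
      using x_old \<nu>_old atomic_flow_endpoints(2)[OF A x_old(1)] unfolding weakening_redex_def
      by auto
  qed
qed

lemma coweakening_redex_reflect:
  assumes A: "atomic_flow A" and R: "replaces_without_weakenings A B"
    and "coweakening_redex B x"
  shows "coweakening_redex A x"
proof -
  obtain \<nu> \<mu> where x: "x \<in> edges B"
    and \<nu>: "\<nu> \<in> verts B" "lo B x = Node \<nu>" "lab B \<nu> = Coweakening"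
    and \<mu>: "\<mu> \<in> verts B" "up B x = Node \<mu>" "lab B \<mu> \<in> {Cocontraction, Interaction, Contraction}"
    using \<open>coweakening_redex B x\<close> unfolding coweakening_redex_def by blast
  have \<nu>_old: "\<nu> \<in> verts A" "lab A \<nu> = Coweakening"
    using R \<nu> unfolding replaces_without_weakenings_def by auto
  then have x_old: "x \<in> edges A" "lo A x = Node \<nu>"
    using R x \<nu>(2) unfolding replaces_without_weakenings_def by auto
  show ?thesis
  proof (cases "up B x = up A x")
    case True
    then have "\<mu> \<in> verts A" "lab A \<mu> = lab B \<mu>"
      using atomic_flow_endpoints(1)[OF A x_old(1)] R \<mu> unfolding replaces_without_weakenings_def
      by auto
    then show ?thesis
      using x_old \<nu>_old \<mu> True unfolding coweakening_redex_def by auto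
  next
    case False
    then obtain w where "up A x = Node w" "lab A w \<in> {Interaction, Contraction, Cocontraction}"
      using R x x_old(1) unfolding replaces_without_weakenings_def by blast
    then show ?thesis
      using x_old \<nu>_old atomic_flow_endpoints(1)[OF A x_old(1)] unfolding coweakening_redex_def
      by auto
  qed
qed

lemma normal_w_replaces_without_weakenings:
  assumes "atomic_flow A" "replaces_without_weakenings A B" "normal_w A"
  shows "normal_w B"
  using assms weakening_redex_reflect coweakening_redex_reflect normal_w_iff_no_redex by metis

lemma c1_step_replaces_without_weakenings:
  assumes "c1_step A B"
  shows "replaces_without_weakenings A B"
proof -
  obtain g k e e1 e2 e3 k' c1 c2 d1 d2 where
    old: "lab A g = Contraction" "lab A k = Cut" "e1 \<in> edges A" "e2 \<in> edges A" "e3 \<in> edges A"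
      "lo A e1 = Node g" "lo A e2 = Node g" "lo A e3 = Node k"
    and new: "k' \<notin> verts A" "c1 \<notin> verts A" "c2 \<notin> verts A" "k' \<noteq> c1" "k' \<noteq> c2"
      "d1 \<notin> edges A" "d2 \<notin> edges A"
    and B: "verts B = (verts A - {g, k}) \<union> {k', c1, c2}"
      "edges B = (edges A - {e}) \<union> {d1, d2}"
      "\<forall>v \<in> verts B. lab B v =
         (if v = k' then Cocontraction else if v = c1 \<or> v = c2 then Cut else lab A v)"
      "\<forall>x \<in> edges B. up B x = (if x = d1 \<or> x = d2 then Node k' else up A x)"
      "\<forall>x \<in> edges B. lo B x =
         (if x = d1 \<or> x = e1 then Node c1 else if x = d2 \<or> x = e2 then Node c2
          else if x = e3 then Node k' else lo A x)"
    using assms unfolding c1_step_def by (elim exE conjE) (rule that; assumption)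
  show ?thesis
    unfolding replaces_without_weakenings_def using old new B(1,2) B(3-5)[rule_format]
    by (intro conjI ballI) auto
qed

lemma c2_step_replaces_without_weakenings:
  assumes "c2_step A B"
  shows "replaces_without_weakenings A B"
proof -
  obtain i k e1 e2 e3 e4 g' i1 i2 d1 d2 where
    old: "lab A i = Interaction" "lab A k = Cocontraction"
      "e1 \<in> edges A" "e2 \<in> edges A" "e3 \<in> edges A"
      "up A e3 = Node i" "up A e1 = Node k" "up A e2 = Node k"
    and new: "g' \<notin> verts A" "i1 \<notin> verts A" "i2 \<notin> verts A" "g' \<noteq> i1" "g' \<noteq> i2"
      "d1 \<notin> edges A" "d2 \<notin> edges A"
    and B: "verts B = (verts A - {i, k}) \<union> {g', i1, i2}"
      "edges B = (edges A - {e4}) \<union> {d1, d2}"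
      "\<forall>v \<in> verts B. lab B v =
         (if v = g' then Contraction else if v = i1 \<or> v = i2 then Interaction else lab A v)"
      "\<forall>x \<in> edges B. lo B x = (if x = d1 \<or> x = d2 then Node g' else lo A x)"
      "\<forall>x \<in> edges B. up B x =
         (if x = d1 \<or> x = e1 then Node i1 else if x = d2 \<or> x = e2 then Node i2
          else if x = e3 then Node g' else up A x)"
    using assms unfolding c2_step_def by (elim exE conjE) (rule that; assumption)
  show ?thesis
    unfolding replaces_without_weakenings_def using old new B(1,2) B(3-5)[rule_format]
    by (intro conjI ballI) auto
qed

lemma c3_step_replaces_without_weakenings:
  assumes "c3_step A B"
  shows "replaces_without_weakenings A B"
proof -
  obtain g k e e1 e2 e3 e4 k1 k2 g3 g4 d13 d14 d23 d24 where
    old: "lab A g = Contraction" "lab A k = Cocontraction"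
      "e1 \<in> edges A" "e2 \<in> edges A" "e3 \<in> edges A" "e4 \<in> edges A"
      "lo A e1 = Node g" "lo A e2 = Node g" "up A e3 = Node k" "up A e4 = Node k"
    and new: "k1 \<notin> verts A" "k2 \<notin> verts A" "g3 \<notin> verts A" "g4 \<notin> verts A"
      "distinct [k1, k2, g3, g4]"
      "d13 \<notin> edges A" "d14 \<notin> edges A" "d23 \<notin> edges A" "d24 \<notin> edges A"
    and B: "verts B = (verts A - {g, k}) \<union> {k1, k2, g3, g4}"
      "edges B = (edges A - {e}) \<union> {d13, d14, d23, d24}"
      "\<forall>v \<in> verts B. lab B v =
         (if v = k1 \<or> v = k2 then Cocontraction
          else if v = g3 \<or> v = g4 then Contraction else lab A v)"
      "\<forall>x \<in> edges B. up B x =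
         (if x = d13 \<or> x = d14 then Node k1 else if x = d23 \<or> x = d24 then Node k2
          else if x = e3 then Node g3 else if x = e4 then Node g4 else up A x)"
      "\<forall>x \<in> edges B. lo B x =
         (if x = d13 \<or> x = d23 then Node g3 else if x = d14 \<or> x = d24 then Node g4
          else if x = e1 then Node k1 else if x = e2 then Node k2 else lo A x)"
    using assms unfolding c3_step_def by (elim exE conjE) (rule that; assumption)
  show ?thesis
    unfolding replaces_without_weakenings_def using old new B(1,2) B(3-5)[rule_format]
    by (intro conjI ballI) auto
qed

theorem proposition4p20:
  fixes A B :: "('v, 'e) flow"
  assumes "atomic_flow A"
    and "normal_w A"
    and "c_step\<^sup>*\<^sup>* A B"
  shows "normal_w B"
  using assms(3,2)
proof (induction rule: rtranclp_induct)
  case base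
  then show ?case .
next
  case (step B C)
  then show ?case
    using c1_step_replaces_without_weakenings c2_step_replaces_without_weakenings
      c3_step_replaces_without_weakenings normal_w_replaces_without_weakenings
    unfolding c_step_def by blast
qed

end
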